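(* Suppose that $E_Q[\xi\mid\mathcal G]\in L_{\mathcal F}$ for every $Q\in L_{\mathcal F}^*\cap\mathcal P_{\mathcal G}$ and every $\xi\in L_{\mathcal F}$. Let $Q\in L_{\mathcal F}^*\cap\mathcal P_{\mathcal G}$ and let $\pi:L_{\mathcal F}\to L_{\mathcal G}$ satisfy (MON) and (REG). Then for every $X\in L_{\mathcal F}$ \[ K(X,Q)=\inf_{\xi\in L_{\mathcal F}}\big\{\pi(\xi)\ \big|\ E_Q[\xi\mid\mathcal G]=E_Q[X\mid\mathcal G]\big\}, \] where $K(X,Q):=\inf_{\xi\in L_{\mathcal F}}\{\pi(\xi)\mid E_Q[\xi\mid\mathcal G]\ge E_Q[X\mid\mathcal G]\}$.
   Context: Let $(\Omega,\mathcal F,\mathbb P)$ be a probability space and $\mathcal G\subseteq\mathcal F$ a sub-$\sigma$-algebra. (In)equalities between random variables hold $\mathbb P$-a.s.; $\inf$ denotes the $\mathbb P$-essential infimum. Standing assumptions: $L_{\mathcal F}\subseteq L^0(\Omega,\mathcal F,\mathbb P)$, $L_{\mathcal G}\subseteq L^0(\Omega,\mathcal G,\mathbb P)$ are vector lattices closed under multiplication by indicators of $\mathcal F$- (resp. $\mathcal G$-) measurable sets; the order continuous dual $L^*_{\mathcal F}$ of $(L_{\mathcal F},\ge)$ is a lattice contained in $L^1(\Omega,\mathcal F,\mathbb P)$ (functionals $X\mapsto E_{\mathbb P}[ZX]$), closed under multiplication by indicators of sets in $\mathcal F$; $(L_{\mathcal F},\sigma(L_{\mathcal F},L^*_{\mathcal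 F}))$ is a locally convex Riesz space. $\mathcal P_{\mathcal G}$ is the set of probabilities $Q\ll\mathbb P$ with $Q=\mathbb P$ on $\mathcal G$ (identified with densities $dQ/d\mathbb P$); for such $Q$, comparisons of $\mathcal G$-measurable variables hold equivalently $Q$-a.s. or $\mathbb P$-a.s. (MON): $X\le Y\Rightarrow \pi(X)\le\pi(Y)$. (REG): $\pi(X\mathbf 1_A+Y\mathbf 1_{A^c})=\pi(X)\mathbf 1_A+\pi(Y)\mathbf 1_{A^c}$ for $X,Y\in L_{\mathcal F}$, $A\in\mathcal G$. *)

theory Defs
  imports "HOL-Probability.Probability"
begin

definition vector_lattice_rv :: "'a measure \<Rightarrow> ('a \<Rightarrow> real) set \<Rightarrow> bool" where
  "vector_lattice_rv N S \<longleftrightarrow>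
     S \<subseteq> borel_measurable N \<and> (\<lambda>_. 0) \<in> S \<and>
     (\<forall>X\<in>S. \<forall>Y\<in>S. (\<lambda>\<omega>. X \<omega> + Y \<omega>) \<in> S) \<and>
     (\<forall>c::real. \<forall>X\<in>S. (\<lambda>\<omega>. c * X \<omega>) \<in> S) \<and>
     (\<forall>X\<in>S. \<forall>Y\<in>S. (\<lambda>\<omega>. max (X \<omega>) (Y \<omega>)) \<in> S) \<and>
     (\<forall>X\<in>S. \<forall>Y\<in>S. (\<lambda>\<omega>. min (X \<omega>) (Y \<omega>)) \<in> S)"

definition indicator_closed :: "'a measure \<Rightarrow> ('a \<Rightarrow> real) set \<Rightarrow> bool" where
  "indicator_closed N S \<longleftrightarrow> (\<forall>A\<in>sets N. \<forall>X\<in>S. (\<lambda>\<omega>. indicator A \<omega> * X \<omega>) \<in> S)"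

text \<open>Order continuous dual of (L, \<ge>) (order taken P-a.s.), identified with densities Z
  in L^1 acting via X \<mapsto> E_P[Z X]: such a functional is order continuous iff for every
  nonempty downward directed D \<subseteq> L with infimum 0 in L, the net (E[Z d])_{d\<in>D}
  converges to 0.\<close>
definition order_cont_dual :: "'a measure \<Rightarrow> ('a \<Rightarrow> real) set \<Rightarrow> ('a \<Rightarrow> real) set" where
  "order_cont_dual M L = {Z. integrable M Z \<and>
     (\<forall>X\<in>L. integrable M (\<lambda>\<omega>. Z \<omega> * X \<omega>)) \<and>
     (\<forall>D. D \<subseteq> L \<and> D \<noteq> {} \<and>
          (\<forall>a\<in>D. \<forall>b\<in>D. \<exists>c\<in>D. (AE \<omega> in M. c \<omega> \<le> a \<omega>) \<and> (AE \<omega> in M. c \<omega> \<le> b \<omega>)) \<and>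
          (\<forall>d\<in>D. AE \<omega> in M. 0 \<le> d \<omega>) \<and>
          (\<forall>Y\<in>L. (\<forall>d\<in>D. AE \<omega> in M. Y \<omega> \<le> d \<omega>) \<longrightarrow> (AE \<omega> in M. Y \<omega> \<le> 0))
        \<longrightarrow> (\<forall>e>0. \<exists>d0\<in>D. \<forall>d\<in>D. (AE \<omega> in M. d \<omega> \<le> d0 \<omega>) \<longrightarrow>
                \<bar>\<integral>\<omega>. Z \<omega> * d \<omega> \<partial>M\<bar> < e))}"

text \<open>P_G: densities dQ/dP of probabilities Q \<ll> P with Q = P on G.\<close>
definition PG :: "'a measure \<Rightarrow> 'a measure \<Rightarrow> ('a \<Rightarrow> real) set" where
  "PG M G = {Z. Z \<in> borel_measurable M \<and> (AE \<omega> in M. 0 \<le> Z \<omega>) \<and> integrable M Z \<and>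
     (\<forall>A\<in>sets G. (\<integral>\<omega>. indicator A \<omega> * Z \<omega> \<partial>M) = measure M A)}"

definition condE :: "'a measure \<Rightarrow> 'a measure \<Rightarrow> ('a \<Rightarrow> real) \<Rightarrow> ('a \<Rightarrow> real) \<Rightarrow> ('a \<Rightarrow> real)" where
  "condE M G Z \<xi> = real_cond_exp (density M (\<lambda>\<omega>. ennreal (Z \<omega>))) G \<xi>"

definition is_ess_inf :: "'a measure \<Rightarrow> ('a \<Rightarrow> real) set \<Rightarrow> ('a \<Rightarrow> ereal) \<Rightarrow> bool" where
  "is_ess_inf M S Y \<longleftrightarrow> Y \<in> borel_measurable M \<and>
     (\<forall>X\<in>S. AE \<omega> in M. Y \<omega> \<le> ereal (X \<omega>)) \<and>
     (\<forall>W\<in>borel_measurable M. (\<forall>X\<in>S. AE \<omega> in M. W \<omega> \<le> ereal (X \<omega>)) \<longrightarrow>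
        (AE \<omega> in M. W \<omega> \<le> Y \<omega>))"

definition ess_inf_fam :: "'a measure \<Rightarrow> ('a \<Rightarrow> real) set \<Rightarrow> ('a \<Rightarrow> ereal)" where
  "ess_inf_fam M S = (SOME Y. is_ess_inf M S Y)"

definition Kfun :: "'a measure \<Rightarrow> 'a measure \<Rightarrow> ('a \<Rightarrow> real) set \<Rightarrow>
    (('a \<Rightarrow> real) \<Rightarrow> ('a \<Rightarrow> real)) \<Rightarrow> ('a \<Rightarrow> real) \<Rightarrow> ('a \<Rightarrow> real) \<Rightarrow> ('a \<Rightarrow> ereal)" where
  "Kfun M G LF \<pi> X Z = ess_inf_fam M
     {\<pi> \<xi> | \<xi>. \<xi> \<in> LF \<and> (AE \<omega> in M. condE M G Z \<xi> \<omega> \<ge> condE M G Z X \<omega>)}"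

end

theory Submission imports Defs begin

text \<open>For a density \<open>Z \<in> PG M G\<close> the random variable \<open>\<eta> = \<xi> - E\<^sub>Q[\<xi>|G] + E\<^sub>Q[X|G]\<close> lies
  below \<open>\<xi>\<close> whenever \<open>E\<^sub>Q[\<xi>|G] \<ge> E\<^sub>Q[X|G]\<close>, belongs to \<open>L\<^sub>F\<close> because \<open>L\<^sub>F\<close> is stable under
  \<open>E\<^sub>Q[\<cdot>|G]\<close>, and satisfies \<open>E\<^sub>Q[\<eta>|G] = E\<^sub>Q[X|G]\<close>. By (MON), \<open>\<pi>(\<eta>) \<le> \<pi>(\<xi>)\<close>, so the
  constraint set with equality is coinitial in the one with inequality and both
  essential infima agree. Since \<open>Q = P\<close> on \<open>G\<close>, equalities of \<open>G\<close>-measurable variables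
  holding \<open>Q\<close>-a.s. also hold \<open>P\<close>-a.s..\<close>

context
  fixes M G :: "'a measure" and Z :: "'a \<Rightarrow> real"
  assumes prob: "prob_space M" and sub: "subalgebra M G" and Z: "Z \<in> PG M G"
begin

private abbreviation "N \<equiv> density M (\<lambda>\<omega>. ennreal (Z \<omega>))"

lemma emeasure_density_PG:
  assumes A: "A \<in> sets G"
  shows "emeasure N A = ennreal (measure M A)"
proof -
  have [measurable]: "Z \<in> borel_measurable M" and Zi: "integrable M Z"
    and Zp: "AE \<omega> in M. 0 \<le> Z \<omega>"
    and ZA: "(\<integral>\<omega>. indicator A \<omega> * Z \<omega> \<partial>M) = measure M A"
    using Z A unfolding PG_def by auto
  have AM: "A \<in> sets M" using A sub unfolding subalgebra_def by auto
  have "emeasure N A = (\<integral>\<^sup>+ \<omega>. ennreal (Z \<omega>) * indicator A \<omega> \<partial>M)"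
    by (rule emeasure_density) (auto simp: AM)
  also have "\<dots> = (\<integral>\<^sup>+ \<omega>. ennreal (indicator A \<omega> * Z \<omega>) \<partial>M)"
    by (intro nn_integral_cong) (auto simp: indicator_def)
  also have "\<dots> = ennreal (\<integral>\<omega>. indicator A \<omega> * Z \<omega> \<partial>M)"
    using integrable_mult_indicator[OF AM Zi] Zp
    by (intro nn_integral_eq_integral) (auto simp: indicator_def)
  finally show ?thesis using ZA by simp
qed

lemma finite_measure_subalgebra_density_PG: "finite_measure_subalgebra N G"
proof -
  have "space G = space M" using sub unfolding subalgebra_def by auto
  then have "emeasure N (space N) \<noteq> \<infinity>"
    using emeasure_density_PG[OF sets.top[of G]] by simp
  then have "finite_measure N" by (rule finite_measureI)
  moreover have "subalgebra N G" using sub unfolding subalgebra_def by auto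
  ultimately show ?thesis
    by (simp add: finite_measure_subalgebra_def finite_measure_subalgebra_axioms_def)
qed

lemma AE_density_PG_imp_AE:
  fixes f g :: "'a \<Rightarrow> real"
  assumes [measurable]: "f \<in> borel_measurable G" "g \<in> borel_measurable G"
    and ae: "AE \<omega> in N. f \<omega> = g \<omega>"
  shows "AE \<omega> in M. f \<omega> = g \<omega>"
proof -
  interpret prob_space M by (rule prob)
  have sG: "sets G \<subseteq> sets M" "space G = space M" using sub unfolding subalgebra_def by auto
  define A where "A = {\<omega>\<in>space G. f \<omega> \<noteq> g \<omega>}"
  have AG: "A \<in> sets G" unfolding A_def by measurable
  have A_eq: "{\<omega>\<in>space N. \<not> f \<omega> = g \<omega>} = A" using sG unfolding A_def by simp
  have "A \<in> sets N" using AG sG(1) by (simp add: subsetD)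
  then have "emeasure N A = 0" using AE_iff_measurable[OF _ A_eq] ae by simp
  then have "measure M A = 0" using emeasure_density_PG[OF AG] by simp
  then have "A \<in> null_sets M" using AG sG by (auto simp: emeasure_eq_measure)
  then show ?thesis using sG unfolding A_def by (auto intro: AE_I')
qed

lemma condE_shift_eq:
  assumes \<xi>[measurable]: "\<xi> \<in> borel_measurable M" and X[measurable]: "X \<in> borel_measurable M"
    and i\<xi>: "integrable M (\<lambda>\<omega>. Z \<omega> * \<xi> \<omega>)" and iX: "integrable M (\<lambda>\<omega>. Z \<omega> * X \<omega>)"
  shows "AE \<omega> in M. condE M G Z (\<lambda>\<omega>'. \<xi> \<omega>' - condE M G Z \<xi> \<omega>' + condE M G Z X \<omega>') \<omega>
                    = condE M G Z X \<omega>"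
proof -
  interpret fms: finite_measure_subalgebra N G by (rule finite_measure_subalgebra_density_PG)
  have [measurable]: "Z \<in> borel_measurable M" and Zp: "AE \<omega> in M. 0 \<le> Z \<omega>"
    using Z unfolding PG_def by auto
  have cE: "condE M G Z = real_cond_exp N G" unfolding condE_def by (rule ext) simp
  define c\<xi> where "c\<xi> = real_cond_exp N G \<xi>"
  define cX where "cX = real_cond_exp N G X"
  have [measurable]: "c\<xi> \<in> borel_measurable G" "cX \<in> borel_measurable G"
    unfolding c\<xi>_def cX_def by auto
  have iN\<xi>: "integrable N \<xi>" and iNX: "integrable N X"
    using integrable_density[OF \<xi>] integrable_density[OF X] i\<xi> iX Zp by auto
  then have ic\<xi>: "integrable N c\<xi>" and icX: "integrable N cX"
    unfolding c\<xi>_def cX_def by auto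
  have "AE \<omega> in N. real_cond_exp N G (\<lambda>\<omega>'. \<xi> \<omega>' - c\<xi> \<omega>' + cX \<omega>') \<omega>
          = real_cond_exp N G (\<lambda>\<omega>'. \<xi> \<omega>' - c\<xi> \<omega>') \<omega> + real_cond_exp N G cX \<omega>"
    using fms.real_cond_exp_add[of "\<lambda>\<omega>. \<xi> \<omega> - c\<xi> \<omega>" cX] iN\<xi> ic\<xi> icX by auto
  moreover have "AE \<omega> in N. real_cond_exp N G (\<lambda>\<omega>'. \<xi> \<omega>' - c\<xi> \<omega>') \<omega>
                    = real_cond_exp N G \<xi> \<omega> - real_cond_exp N G c\<xi> \<omega>"
    using fms.real_cond_exp_diff[of \<xi> c\<xi>] iN\<xi> ic\<xi> by auto
  moreover have "AE \<omega> in N. real_cond_exp N G c\<xi> \<omega> = c\<xi> \<omega>"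
    using fms.real_cond_exp_F_meas ic\<xi> by auto
  moreover have "AE \<omega> in N. real_cond_exp N G cX \<omega> = cX \<omega>"
    using fms.real_cond_exp_F_meas icX by auto
  ultimately have "AE \<omega> in N. real_cond_exp N G (\<lambda>\<omega>'. \<xi> \<omega>' - c\<xi> \<omega>' + cX \<omega>') \<omega> = cX \<omega>"
    unfolding c\<xi>_def by eventually_elim simp
  then show ?thesis
    unfolding cE c\<xi>_def[symmetric] cX_def[symmetric] by (intro AE_density_PG_imp_AE) auto
qed

end

lemma ess_inf_fam_coinitial_subset:
  assumes sub: "S' \<subseteq> S" and coinitial: "\<forall>X\<in>S. \<exists>Y\<in>S'. AE \<omega> in M. Y \<omega> \<le> X \<omega>"
  shows "ess_inf_fam M S = ess_inf_fam M S'"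
proof -
  have lower_bound_iff: "(\<forall>X\<in>S. AE \<omega> in M. W \<omega> \<le> ereal (X \<omega>)) \<longleftrightarrow>
                         (\<forall>X\<in>S'. AE \<omega> in M. W \<omega> \<le> ereal (X \<omega>))" for W :: "'a \<Rightarrow> ereal"
  proof
    assume "\<forall>X\<in>S'. AE \<omega> in M. W \<omega> \<le> ereal (X \<omega>)"
    show "\<forall>X\<in>S. AE \<omega> in M. W \<omega> \<le> ereal (X \<omega>)"
    proof
      fix X assume "X \<in> S"
      then obtain Y where "Y \<in> S'" and YX: "AE \<omega> in M. Y \<omega> \<le> X \<omega>" using coinitial by blast
      with \<open>\<forall>X\<in>S'. _\<close> have "AE \<omega> in M. W \<omega> \<le> ereal (Y \<omega>)" by blast
      with YX show "AE \<omega> in M. W \<omega> \<le> ereal (X \<omega>)"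
        by eventually_elim (meson ereal_less_eq(3) order_trans)
    qed
  qed (use sub in blast)
  then have "is_ess_inf M S = is_ess_inf M S'"
    unfolding is_ess_inf_def by (intro ext) blast
  then show ?thesis unfolding ess_inf_fam_def by simp
qed

lemma condE_shift_level_set:
  fixes \<xi> X :: "'a \<Rightarrow> real"
  assumes "prob_space M" "subalgebra M G" and LF: "vector_lattice_rv M LF"
    and stable: "\<forall>U\<in>LF. condE M G Z U \<in> LF"
    and Z: "Z \<in> order_cont_dual M LF \<inter> PG M G"
    and "\<xi> \<in> LF" "X \<in> LF"
  shows "(\<lambda>\<omega>. \<xi> \<omega> - condE M G Z \<xi> \<omega> + condE M G Z X \<omega>) \<in> LF"
    and "AE \<omega> in M. condE M G Z (\<lambda>\<omega>'. \<xi> \<omega>' - condE M G Z \<xi> \<omega>' + condE M G Z X \<omega>') \<omega>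
                    = condE M G Z X \<omega>"
proof -
  let ?cE = "condE M G Z"
  have "?cE \<xi> \<in> LF" "?cE X \<in> LF" using stable \<open>\<xi> \<in> LF\<close> \<open>X \<in> LF\<close> by blast+
  moreover have add: "\<And>U V. U \<in> LF \<Longrightarrow> V \<in> LF \<Longrightarrow> (\<lambda>\<omega>. U \<omega> + V \<omega>) \<in> LF"
    and scale: "\<And>c U. U \<in> LF \<Longrightarrow> (\<lambda>\<omega>. c * U \<omega>) \<in> LF"
    using LF unfolding vector_lattice_rv_def by simp_all
  ultimately have "(\<lambda>\<omega>. \<xi> \<omega> + (-1) * ?cE \<xi> \<omega> + ?cE X \<omega>) \<in> LF"
    using \<open>\<xi> \<in> LF\<close> by (intro add scale)
  then show "(\<lambda>\<omega>. \<xi> \<omega> - ?cE \<xi> \<omega> + ?cE X \<omega>) \<in> LF" by simp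
  show "AE \<omega> in M. ?cE (\<lambda>\<omega>'. \<xi> \<omega>' - ?cE \<xi> \<omega>' + ?cE X \<omega>') \<omega> = ?cE X \<omega>"
  proof (rule condE_shift_eq[OF assms(1,2)])
    show "Z \<in> PG M G" using Z by simp
    show "\<xi> \<in> borel_measurable M" "X \<in> borel_measurable M"
      using LF \<open>\<xi> \<in> LF\<close> \<open>X \<in> LF\<close> unfolding vector_lattice_rv_def by auto
    have "\<forall>U\<in>LF. integrable M (\<lambda>\<omega>. Z \<omega> * U \<omega>)" using Z unfolding order_cont_dual_def by simp
    then show "integrable M (\<lambda>\<omega>. Z \<omega> * \<xi> \<omega>)" "integrable M (\<lambda>\<omega>. Z \<omega> * X \<omega>)"
      using \<open>\<xi> \<in> LF\<close> \<open>X \<in> LF\<close> by blast+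
  qed
qed

theorem lemma14:
  fixes M G :: "'a measure"
    and LF LG :: "('a \<Rightarrow> real) set"
    and \<pi> :: "('a \<Rightarrow> real) \<Rightarrow> ('a \<Rightarrow> real)"
    and Z X :: "'a \<Rightarrow> real"
  assumes "prob_space M"
    and "subalgebra M G"
    and "vector_lattice_rv M LF" and "indicator_closed M LF"
    and "vector_lattice_rv G LG" and "indicator_closed G LG"
    and "vector_lattice_rv M (order_cont_dual M LF)"
    and "indicator_closed M (order_cont_dual M LF)"
    and hyp: "\<forall>Q\<in>order_cont_dual M LF \<inter> PG M G. \<forall>\<xi>\<in>LF. condE M G Q \<xi> \<in> LF"
    and Q: "Z \<in> order_cont_dual M LF \<inter> PG M G"
    and "\<forall>\<xi>\<in>LF. \<pi> \<xi> \<in> LG"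
    and MON: "\<forall>U\<in>LF. \<forall>V\<in>LF. (AE \<omega> in M. U \<omega> \<le> V \<omega>) \<longrightarrow> (AE \<omega> in M. \<pi> U \<omega> \<le> \<pi> V \<omega>)"
    and REG: "\<forall>U\<in>LF. \<forall>V\<in>LF. \<forall>A\<in>sets G. AE \<omega> in M.
        \<pi> (\<lambda>\<omega>'. U \<omega>' * indicator A \<omega>' + V \<omega>' * indicator (space M - A) \<omega>') \<omega>
          = \<pi> U \<omega> * indicator A \<omega> + \<pi> V \<omega> * indicator (space M - A) \<omega>"
    and "X \<in> LF"
  shows "AE \<omega> in M. Kfun M G LF \<pi> X Z \<omega> =
           ess_inf_fam M {\<pi> \<xi> | \<xi>. \<xi> \<in> LF \<and> (AE s in M. condE M G Z \<xi> s = condE M G Z X s)} \<omega>"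
proof -
  let ?cE = "condE M G Z"
  have stable: "\<forall>U\<in>LF. ?cE U \<in> LF" using hyp Q by blast
  have "Kfun M G LF \<pi> X Z =
          ess_inf_fam M {\<pi> \<xi> | \<xi>. \<xi> \<in> LF \<and> (AE s in M. ?cE \<xi> s = ?cE X s)}"
    unfolding Kfun_def
  proof (rule ess_inf_fam_coinitial_subset)
    show "\<forall>Y\<in>{\<pi> \<xi> | \<xi>. \<xi> \<in> LF \<and> (AE \<omega> in M. ?cE \<xi> \<omega> \<ge> ?cE X \<omega>)}.
            \<exists>Y'\<in>{\<pi> \<xi> | \<xi>. \<xi> \<in> LF \<and> (AE s in M. ?cE \<xi> s = ?cE X s)}. AE \<omega> in M. Y' \<omega> \<le> Y \<omega>"
    proof safe
      fix \<xi> assume "\<xi> \<in> LF" and ge: "AE \<omega> in M. ?cE \<xi> \<omega> \<ge> ?cE X \<omega>"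
      define \<eta> where "\<eta> = (\<lambda>\<omega>. \<xi> \<omega> - ?cE \<xi> \<omega> + ?cE X \<omega>)"
      have "\<eta> \<in> LF" "AE s in M. ?cE \<eta> s = ?cE X s"
        unfolding \<eta>_def using condE_shift_level_set[OF assms(1-3) stable Q \<open>\<xi> \<in> LF\<close> \<open>X \<in> LF\<close>]
        by simp_all
      moreover have "AE \<omega> in M. \<eta> \<omega> \<le> \<xi> \<omega>" using ge unfolding \<eta>_def by (auto elim: eventually_mono)
      then have "AE \<omega> in M. \<pi> \<eta> \<omega> \<le> \<pi> \<xi> \<omega>" using MON \<open>\<eta> \<in> LF\<close> \<open>\<xi> \<in> LF\<close> by blast
      ultimately show "\<exists>Y'\<in>{\<pi> \<xi> | \<xi>. \<xi> \<in> LF \<and> (AE s in M. ?cE \<xi> s = ?cE X s)}. AE \<omega> in M. Y' \<omega> \<le> \<pi> \<xi> \<omega>"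
        by blast
    qed
  qed (auto elim!: eventually_mono)
  then show ?thesis by simp
qed

end
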